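(* Let $\lambda\in\mathcal O$ be a nonzero limit ordinal, let $\mathcal A,\mathcal B:\mathcal O\to\mathcal P(\mathsf{Tm})$ be functions into sets of terms, let $r$ be a term and $e$ an evaluation frame, with $\limsup$ computed in the powerset lattice of terms. Then (1) $\limsup_{\alpha\to\lambda}(r\cdot\mathcal A(\alpha))\subseteq r\cdot\limsup_\lambda\mathcal A$; (2) $\limsup_{\alpha\to\lambda}e^{-1}(\mathcal A(\alpha))\subseteq e^{-1}(\limsup_\lambda\mathcal A)$; (3) $\limsup_{\alpha\to\lambda}(\mathcal A(\alpha)\cup\mathcal B(\alpha))\subseteq\limsup_\lambda\mathcal A\cup\limsup_\lambda\mathcal B$; (4) if $\mathcal A(\alpha)\subseteq\mathsf V$ for all $\alpha<\lambda$, then $\limsup_{\alpha\to\lambda}{}^{\rhd}(\mathcal A(\alpha))\subseteq{}^{\rhd}(\limsup_\lambda\mathcal A)$.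
   Context: $\mathcal O$ is the set of ordinals $\le\top_{\mathsf{ord}}$ for a fixed ordinal $\top_{\mathsf{ord}}$ ($=\beth_\omega$). For $f:\mathcal O\to\mathfrak L$ into a complete lattice and a nonzero limit $\lambda\in\mathcal O$: $\liminf_{\alpha\to\lambda}f(\alpha)=\sup_{\alpha_0<\lambda}\inf_{\alpha_0\le\alpha<\lambda}f(\alpha)$, $\limsup_{\alpha\to\lambda}f(\alpha)=\inf_{\alpha_0<\lambda}\sup_{\alpha_0\le\alpha<\lambda}f(\alpha)$. Terms ($\mathsf{Tm}$): $r,s,t::=c\mid x\mid\lambda x\,t\mid r\,s$, with variables $x$ and constants $c::=\langle\rangle\mid\mathsf{pair}\mid\mathsf{fst}\mid\mathsf{snd}\mid\mathsf{inl}\mid\mathsf{inr}\mid\mathsf{case}\mid\mathsf{in}\mid\mathsf{out}\mid\mathsf{fix}^\mu_n\mid\mathsf{fix}^\nu_n$ ($n\in\mathbb N$); $t_{1..n}$ abbreviates $t_1\dots t_n$. Values: $\lambda x t$, $\mathsf{pair}\,t_1\,t_2$, $\mathsf{inl}\,t$, $\mathsf{inr}\,t$, $\mathsf{in}\,t$, any constant $c$, $\mathsf{pair}\,t$, and $\mathsf{fix}^\nabla_n s\,t_{1..m}$ with $m\le n$, $\nabla\in\{\mu,\nu\}$. Evaluation frames: $e(\_)::=\_\,s\mid\mathsf{fst}\,\_\mid\mathsf{snd}\,\_\mid\mathsf{case}\,\_\mid\mathsf{out}\,\_\mid\mathsf{fix}^\mu_n\,s\,t_{1..n}\,\_$; evaluation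 contexts $E$ are finite (possibly empty) compositions of frames. $\mathsf V$ is the set of all values together with all terms $E(x)$ ($E$ an evaluation context, $x$ a variable). Reduction $\longrightarrow$ is the closure under all term constructs of: $(\lambda x t)s\to[s/x]t$; $\mathsf{fst}(\mathsf{pair}\,r\,s)\to r$; $\mathsf{snd}(\mathsf{pair}\,r\,s)\to s$; $\mathsf{case}(\mathsf{inl}\,r)\to\lambda x\lambda y.x\,r$; $\mathsf{case}(\mathsf{inr}\,r)\to\lambda x\lambda y.y\,r$ ($x,y\notin FV(r)$); $\mathsf{out}(\mathsf{in}\,r)\to r$; $\mathsf{fix}^\mu_n\,s\,t_{1..n}(\mathsf{in}\,t)\to s(\mathsf{fix}^\mu_n s)t_{1..n}(\mathsf{in}\,t)$; $\mathsf{out}(\mathsf{fix}^\nu_n s\,t_{1..n})\to\mathsf{out}(s(\mathsf{fix}^\nu_n s)t_{1..n})$. $\mathsf S$ is the set of strongly normalizing terms. Safe reduction $\rhd$ is the least relation closed under evaluation contexts ($t\rhd t'\Rightarrow E(t)\rhd E(t')$) and transitivity containing: $(\lambda x t)s\rhd[s/x]t$ if $s\in\mathsf S$; $\mathsf{fst}(\mathsf{pair}\,r\,s)\rhd r$ if $s\in\mathsf S$; $\mathsf{snd}(\mathsf{pair}\,r\,s)\rhd s$ if $r\in\mathsf S$; $\mathsf{out}(\mathsf{in}\,r)\rhd r$; $\mathsf{case}(\mathsf{inl}\,r)\rhd\lambda x\lambda y.x\,r$; $\mathsf{case}(\mathsf{inr}\,r)\rhd\lambda x\lambda y.y\,r$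 ($x,y\notin FV(r)$); $\mathsf{fix}^\mu_n s\,t_{1..n}(\mathsf{in}\,r)\rhd s(\mathsf{fix}^\mu_n s)t_{1..n}(\mathsf{in}\,r)$; $\mathsf{out}(\mathsf{fix}^\nu_n s\,t_{1..n})\rhd\mathsf{out}(s(\mathsf{fix}^\nu_n s)t_{1..n})$. For a set of terms $\mathcal A$: ${}^{\rhd}\mathcal A=\{t\mid t\in\mathcal A\text{ or }t\rhd t'\text{ for some }t'\in\mathcal A\}$, $r\cdot\mathcal A=\{r\,s\mid s\in\mathcal A\}$, $e^{-1}\mathcal A=\{r\mid e(r)\in\mathcal A\}$. *)

theory Defs
  imports Main
begin

text \<open>The ordinal index set O is rendered as an arbitrary well-ordered type.\<close>

definition is_nonzero_limit :: "'o::wellorder \<Rightarrow> bool" where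
  "is_nonzero_limit l \<longleftrightarrow> (\<exists>a. a < l) \<and> (\<forall>a<l. \<exists>b. a < b \<and> b < l)"

definition ord_liminf :: "('o::wellorder \<Rightarrow> 'b::complete_lattice) \<Rightarrow> 'o \<Rightarrow> 'b" where
  "ord_liminf f l = (SUP a0\<in>{..<l}. INF a\<in>{a0..<l}. f a)"

definition ord_limsup :: "('o::wellorder \<Rightarrow> 'b::complete_lattice) \<Rightarrow> 'o \<Rightarrow> 'b" where
  "ord_limsup f l = (INF a0\<in>{..<l}. SUP a\<in>{a0..<l}. f a)"

section \<open>Terms (de Bruijn indices: terms up to alpha-equivalence)\<close>

datatype const = CUnit | CPair | CFst | CSnd | CInl | CInr | CCase | CIn | COut
  | CFixMu nat | CFixNu nat

datatype tm = C const | Var nat | Lam tm | App tm tm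

definition apps :: "tm \<Rightarrow> tm list \<Rightarrow> tm" where
  "apps r ts = foldl App r ts"

fun lift :: "nat \<Rightarrow> tm \<Rightarrow> tm" where
  "lift k (C c) = C c"
| "lift k (Var i) = (if i < k then Var i else Var (Suc i))"
| "lift k (Lam t) = Lam (lift (Suc k) t)"
| "lift k (App t u) = App (lift k t) (lift k u)"

fun subst :: "tm \<Rightarrow> nat \<Rightarrow> tm \<Rightarrow> tm" where
  "subst (C c) k s = C c"
| "subst (Var i) k s = (if i < k then Var i else if i = k then s else Var (i - 1))"
| "subst (Lam t) k s = Lam (subst t (Suc k) (lift 0 s))"
| "subst (App t u) k s = App (subst t k s) (subst u k s)"

text \<open>lambda x lambda y. x r  and  lambda x lambda y. y r, with x, y not free in r\<close>
definition case_l :: "tm \<Rightarrow> tm" where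
  "case_l r = Lam (Lam (App (Var 1) (lift 0 (lift 0 r))))"
definition case_r :: "tm \<Rightarrow> tm" where
  "case_r r = Lam (Lam (App (Var 0) (lift 0 (lift 0 r))))"

inductive red :: "tm \<Rightarrow> tm \<Rightarrow> bool" where
  beta: "red (App (Lam t) s) (subst t 0 s)"
| fst: "red (App (C CFst) (App (App (C CPair) r) s)) r"
| snd: "red (App (C CSnd) (App (App (C CPair) r) s)) s"
| case_inl: "red (App (C CCase) (App (C CInl) r)) (case_l r)"
| case_inr: "red (App (C CCase) (App (C CInr) r)) (case_r r)"
| out_in: "red (App (C COut) (App (C CIn) r)) r"
| fix_mu: "length ts = n \<Longrightarrow>
    red (App (apps (App (C (CFixMu n)) s) ts) (App (C CIn) t))
        (App (apps (App s (App (C (CFixMu n)) s)) ts) (App (C CIn) t))"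
| fix_nu: "length ts = n \<Longrightarrow>
    red (App (C COut) (apps (App (C (CFixNu n)) s) ts))
        (App (C COut) (apps (App s (App (C (CFixNu n)) s)) ts))"
| lam: "red t t' \<Longrightarrow> red (Lam t) (Lam t')"
| app1: "red t t' \<Longrightarrow> red (App t u) (App t' u)"
| app2: "red u u' \<Longrightarrow> red (App t u) (App t u')"

inductive SN :: "tm \<Rightarrow> bool" where
  SNI: "(\<And>t'. red t t' \<Longrightarrow> SN t') \<Longrightarrow> SN t"

definition S :: "tm set" where
  "S = {t. SN t}"

datatype frame = FApp tm | FFst | FSnd | FCase | FOut | FFix tm "tm list"

fun fill :: "frame \<Rightarrow> tm \<Rightarrow> tm" where
  "fill (FApp s) r = App r s"
| "fill FFst r = App (C CFst) r"
| "fill FSnd r = App (C CSnd) r"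
| "fill FCase r = App (C CCase) r"
| "fill FOut r = App (C COut) r"
| "fill (FFix s ts) r = App (apps (App (C (CFixMu (length ts))) s) ts) r"

fun plugE :: "frame list \<Rightarrow> tm \<Rightarrow> tm" where
  "plugE [] t = t"
| "plugE (e # E) t = fill e (plugE E t)"

inductive is_value :: "tm \<Rightarrow> bool" where
  "is_value (Lam t)"
| "is_value (App (App (C CPair) t1) t2)"
| "is_value (App (C CInl) t)"
| "is_value (App (C CInr) t)"
| "is_value (App (C CIn) t)"
| "is_value (C c)"
| "is_value (App (C CPair) t)"
| "length ts \<le> n \<Longrightarrow> is_value (apps (App (C (CFixMu n)) s) ts)"
| "length ts \<le> n \<Longrightarrow> is_value (apps (App (C (CFixNu n)) s) ts)"

definition V :: "tm set" where
  "V = {t. is_value t} \<union> {plugE E (Var x) | E x. True}"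

inductive safe :: "tm \<Rightarrow> tm \<Rightarrow> bool" where
  beta: "s \<in> S \<Longrightarrow> safe (App (Lam t) s) (subst t 0 s)"
| fst: "s \<in> S \<Longrightarrow> safe (App (C CFst) (App (App (C CPair) r) s)) r"
| snd: "r \<in> S \<Longrightarrow> safe (App (C CSnd) (App (App (C CPair) r) s)) s"
| out_in: "safe (App (C COut) (App (C CIn) r)) r"
| case_inl: "safe (App (C CCase) (App (C CInl) r)) (case_l r)"
| case_inr: "safe (App (C CCase) (App (C CInr) r)) (case_r r)"
| fix_mu: "length ts = n \<Longrightarrow>
    safe (App (apps (App (C (CFixMu n)) s) ts) (App (C CIn) r))
         (App (apps (App s (App (C (CFixMu n)) s)) ts) (App (C CIn) r))"
| fix_nu: "length ts = n \<Longrightarrow>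
    safe (App (C COut) (apps (App (C (CFixNu n)) s) ts))
         (App (C COut) (apps (App s (App (C (CFixNu n)) s)) ts))"
| ctx: "safe t t' \<Longrightarrow> safe (plugE E t) (plugE E t')"
| trans: "safe t t' \<Longrightarrow> safe t' t'' \<Longrightarrow> safe t t''"

definition safe_pre :: "tm set \<Rightarrow> tm set" where
  "safe_pre A = {t. t \<in> A \<or> (\<exists>t'. safe t t' \<and> t' \<in> A)}"

definition app_set :: "tm \<Rightarrow> tm set \<Rightarrow> tm set" where
  "app_set r A = {App r s | s. s \<in> A}"

definition frame_inv :: "frame \<Rightarrow> tm set \<Rightarrow> tm set" where
  "frame_inv e A = {r. fill e r \<in> A}"

end

theory Submission
  imports Defs
begin

text \<open>
  Parts (1)--(3) hold because the index set is linearly ordered: membership in a limit superior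
  means "cofinally often below l", and two cofinal conditions can be merged by taking maxima.
  Part (4) rests on determinism.  Safe reduction lies in the reflexive transitive closure of a
  deterministic relation that reduces one redex under a stack of frames, and every term of V is
  normal for it; so a term safely reduces to at most one element of V.  If t lies cofinally often
  in the safe preimage of A a but eventually not in A a itself, the element of V it reduces to is
  therefore always the same term, which then lies in the limit superior of A.
\<close>

lemma mem_ord_limsup:
  fixes A :: "'o::wellorder \<Rightarrow> 'a set"
  shows "t \<in> ord_limsup A l \<longleftrightarrow> (\<forall>a0<l. \<exists>a. a0 \<le> a \<and> a < l \<and> t \<in> A a)"
  unfolding ord_limsup_def by (auto; meson atLeastLessThan_iff lessThan_iff)

lemma ord_limsup_image_subset:
  fixes A :: "'o::wellorder \<Rightarrow> 'a set"
  assumes "inj f" and "b < l"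
  shows "ord_limsup (\<lambda>a. f ` A a) l \<subseteq> f ` ord_limsup A l"
proof
  fix t assume t: "t \<in> ord_limsup (\<lambda>a. f ` A a) l"
  then obtain s where "t = f s"
    using \<open>b < l\<close> by (auto simp: mem_ord_limsup)
  with t \<open>inj f\<close> have "s \<in> ord_limsup A l"
    by (auto simp: mem_ord_limsup inj_image_mem_iff)
  with \<open>t = f s\<close> show "t \<in> f ` ord_limsup A l" by blast
qed

lemma ord_limsup_vimage:
  fixes A :: "'o::wellorder \<Rightarrow> 'a set"
  shows "ord_limsup (\<lambda>a. f -` A a) l = f -` ord_limsup A l"
  by (simp add: set_eq_iff mem_ord_limsup)

lemma ord_limsup_Un:
  fixes A B :: "'o::wellorder \<Rightarrow> 'a set"
  shows "ord_limsup (\<lambda>a. A a \<union> B a) l = ord_limsup A l \<union> ord_limsup B l"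
proof
  show "ord_limsup (\<lambda>a. A a \<union> B a) l \<subseteq> ord_limsup A l \<union> ord_limsup B l"
  proof
    fix t assume t: "t \<in> ord_limsup (\<lambda>a. A a \<union> B a) l"
    show "t \<in> ord_limsup A l \<union> ord_limsup B l"
    proof (rule ccontr)
      assume "t \<notin> ord_limsup A l \<union> ord_limsup B l"
      then obtain a0 b0 where "a0 < l" "\<forall>a. a0 \<le> a \<and> a < l \<longrightarrow> t \<notin> A a"
        and "b0 < l" "\<forall>a. b0 \<le> a \<and> a < l \<longrightarrow> t \<notin> B a"
        by (auto simp: mem_ord_limsup)
      moreover have "max a0 b0 < l" using \<open>a0 < l\<close> \<open>b0 < l\<close> by simp
      with t obtain a where "max a0 b0 \<le> a" "a < l" "t \<in> A a \<union> B a"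
        unfolding mem_ord_limsup by blast
      ultimately show False by auto
    qed
  qed
qed (fastforce simp: mem_ord_limsup)

lemma ord_limsup_preimage_subset:
  fixes A :: "'o::wellorder \<Rightarrow> 'a set"
  assumes A_W: "\<forall>a<l. A a \<subseteq> W"
    and unique: "\<And>t u u'. R t u \<Longrightarrow> R t u' \<Longrightarrow> u \<in> W \<Longrightarrow> u' \<in> W \<Longrightarrow> u = u'"
  shows "ord_limsup (\<lambda>a. {t. \<exists>u. R\<^sup>=\<^sup>= t u \<and> u \<in> A a}) l
           \<subseteq> {t. \<exists>u. R\<^sup>=\<^sup>= t u \<and> u \<in> ord_limsup A l}"
proof
  fix t assume t: "t \<in> ord_limsup (\<lambda>a. {t. \<exists>u. R\<^sup>=\<^sup>= t u \<and> u \<in> A a}) l"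
  show "t \<in> {t. \<exists>u. R\<^sup>=\<^sup>= t u \<and> u \<in> ord_limsup A l}"
  proof (cases "t \<in> ord_limsup A l")
    case False
    then obtain a0 where a0: "a0 < l" "\<forall>a. a0 \<le> a \<and> a < l \<longrightarrow> t \<notin> A a"
      by (auto simp: mem_ord_limsup)
    with t obtain a1 where a1: "a0 \<le> a1" "a1 < l" "\<exists>u. R\<^sup>=\<^sup>= t u \<and> u \<in> A a1"
      unfolding mem_ord_limsup by blast
    with a0 obtain u where u: "R t u" "u \<in> A a1"
      by auto
    have "u \<in> ord_limsup A l"
      unfolding mem_ord_limsup
    proof (intro allI impI)
      fix b0 assume "b0 < l"
      with a0 have "max a0 b0 < l" by simp
      with t obtain a where a: "max a0 b0 \<le> a" "a < l" "\<exists>u. R\<^sup>=\<^sup>= t u \<and> u \<in> A a"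
        unfolding mem_ord_limsup by blast
      with a0 obtain u' where u': "R t u'" "u' \<in> A a"
        by auto
      have "u' = u"
        using unique[OF u'(1) u(1)] u'(2) u(2) A_W a a1 by blast
      with a u' show "\<exists>a\<ge>b0. a < l \<and> u \<in> A a" by auto
    qed
    with u show ?thesis by blast
  qed blast
qed

lemma right_unique_rtranclp_normal_form:
  assumes "right_unique R" and "R\<^sup>*\<^sup>* t u" "R\<^sup>*\<^sup>* t v"
    and "\<And>w. \<not> R u w" "\<And>w. \<not> R v w"
  shows "u = v"
proof -
  have "R\<^sup>*\<^sup>* v u" using \<open>R\<^sup>*\<^sup>* t u\<close> \<open>R\<^sup>*\<^sup>* t v\<close>
  proof (induction arbitrary: v rule: converse_rtranclp_induct)
    case base
    with assms(4) show ?case by (auto elim: converse_rtranclpE)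
  next
    case (step t t')
    note IH = step.IH
    from \<open>R\<^sup>*\<^sup>* t v\<close> show ?case
    proof (cases rule: converse_rtranclpE)
      case base
      with step show ?thesis by (auto intro: converse_rtranclp_into_rtranclp)
    next
      case (step t'')
      with \<open>R t t'\<close> \<open>right_unique R\<close> have "t'' = t'" by (auto dest: right_uniqueD)
      with step IH show ?thesis by blast
    qed
  qed
  with assms(5) show ?thesis by (auto elim: converse_rtranclpE)
qed

lemma apps_Nil [simp]: "apps t [] = t"
  by (simp add: apps_def)

lemma apps_snoc [simp]: "apps t (ts @ [u]) = App (apps t ts) u"
  by (simp add: apps_def)

fun head :: "tm \<Rightarrow> tm" where
  "head (App t u) = head t"
| "head t = t"

lemma head_apps [simp]: "head (apps t ts) = head t"
  by (induction ts rule: rev_induct) auto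

lemma apps_App_neq [simp]:
  "apps (App t u) ts \<noteq> C c" "apps (App t u) ts \<noteq> Lam s" "apps (App t u) ts \<noteq> Var x"
  "C c \<noteq> apps (App t u) ts" "Lam s \<noteq> apps (App t u) ts" "Var x \<noteq> apps (App t u) ts"
  by (cases ts rule: rev_exhaust; simp)+

lemma apps_const_eq_iff:
  "apps (App (C c) s) ts = apps (App (C c') s') ts' \<longleftrightarrow> c = c' \<and> s = s' \<and> ts = ts'"
proof (induction ts arbitrary: ts' rule: rev_induct)
  case Nil then show ?case by (cases ts' rule: rev_exhaust) auto
next
  case snoc then show ?case by (cases ts' rule: rev_exhaust) auto
qed

inductive safe_step :: "tm \<Rightarrow> tm \<Rightarrow> bool" where
  beta: "s \<in> S \<Longrightarrow> safe_step (App (Lam t) s) (subst t 0 s)"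
| fst: "s \<in> S \<Longrightarrow> safe_step (App (C CFst) (App (App (C CPair) r) s)) r"
| snd: "r \<in> S \<Longrightarrow> safe_step (App (C CSnd) (App (App (C CPair) r) s)) s"
| out_in: "safe_step (App (C COut) (App (C CIn) r)) r"
| case_inl: "safe_step (App (C CCase) (App (C CInl) r)) (case_l r)"
| case_inr: "safe_step (App (C CCase) (App (C CInr) r)) (case_r r)"
| fix_mu: "length ts = n \<Longrightarrow>
    safe_step (App (apps (App (C (CFixMu n)) s) ts) (App (C CIn) r))
              (App (apps (App s (App (C (CFixMu n)) s)) ts) (App (C CIn) r))"
| fix_nu: "length ts = n \<Longrightarrow>
    safe_step (App (C COut) (apps (App (C (CFixNu n)) s) ts))
              (App (C COut) (apps (App s (App (C (CFixNu n)) s)) ts))"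
| frame: "safe_step t t' \<Longrightarrow> safe_step (fill e t) (fill e t')"

lemma safe_step_plugE: "safe_step\<^sup>*\<^sup>* t t' \<Longrightarrow> safe_step\<^sup>*\<^sup>* (plugE E t) (plugE E t')"
proof (induction E)
  case (Cons e E)
  have "safe_step\<^sup>*\<^sup>* (fill e u) (fill e u')" if "safe_step\<^sup>*\<^sup>* u u'" for u u'
    using that by (induction rule: rtranclp_induct) (auto intro: safe_step.frame rtranclp.rtrancl_into_rtrancl)
  with Cons show ?case by simp
qed simp

lemma safe_imp_rtranclp_safe_step: "safe t t' \<Longrightarrow> safe_step\<^sup>*\<^sup>* t t'"
  by (induction rule: safe.induct) (auto intro: safe_step.intros safe_step_plugE)

fun redex_head :: "tm \<Rightarrow> bool" where
  "redex_head (Lam _) = True"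
| "redex_head (C c) = (c \<in> {CFst, CSnd, CCase, COut} \<or> (\<exists>n. c = CFixMu n))"
| "redex_head _ = False"

lemma safe_step_redex_head: "safe_step t t' \<Longrightarrow> redex_head (head t)"
proof (induction rule: safe_step.induct)
  case (frame t t' e)
  then show ?case by (cases e) auto
qed auto

lemma safe_step_App: "safe_step t t' \<Longrightarrow> \<exists>u v. t = App u v"
proof (induction rule: safe_step.induct)
  case (frame t t' e)
  then show ?case by (cases e) auto
qed auto

lemma fill_eq_App_iff:
  "fill e t = App u v \<longleftrightarrow> (case e of
      FApp s \<Rightarrow> u = t \<and> v = s
    | FFst \<Rightarrow> u = C CFst \<and> v = t
    | FSnd \<Rightarrow> u = C CSnd \<and> v = t
    | FCase \<Rightarrow> u = C CCase \<and> v = t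
    | FOut \<Rightarrow> u = C COut \<and> v = t
    | FFix s ts \<Rightarrow> u = apps (App (C (CFixMu (length ts))) s) ts \<and> v = t)"
  by (cases e) auto

lemma App_eq_fill_iff: "App u v = fill e t \<longleftrightarrow> fill e t = App u v"
  by auto

lemmas fill_App_iffs = fill_eq_App_iff App_eq_fill_iff[unfolded fill_eq_App_iff]

lemma fix_mu_unsaturated_normal:
  "length ts \<le> n \<Longrightarrow> \<not> safe_step (apps (App (C (CFixMu n)) s) ts) t'"
proof (induction ts arbitrary: t' rule: rev_induct)
  case Nil
  show ?case
  proof
    assume "safe_step (apps (App (C (CFixMu n)) s) []) t'"
    then show False
      by (cases rule: safe_step.cases) (auto simp: fill_App_iffs dest: safe_step_App split: frame.splits)
  qed
next
  case (snoc u ts)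
  show ?case
  proof
    assume "safe_step (apps (App (C (CFixMu n)) s) (ts @ [u])) t'"
    then show False using snoc
      by (cases rule: safe_step.cases) (auto simp: fill_App_iffs apps_const_eq_iff split: frame.splits)
  qed
qed

lemma App_eq_apps_iff:
  "App u v = apps (App (C c) s) ts \<longleftrightarrow>
     (ts = [] \<and> u = C c \<and> v = s) \<or> (\<exists>ts'. ts = ts' @ [v] \<and> u = apps (App (C c) s) ts')"
  by (cases ts rule: rev_exhaust) auto

lemma apps_eq_App_iff:
  "apps (App (C c) s) ts = App u v \<longleftrightarrow>
     (ts = [] \<and> u = C c \<and> v = s) \<or> (\<exists>ts'. ts = ts' @ [v] \<and> u = apps (App (C c) s) ts')"
  by (cases ts rule: rev_exhaust) auto

lemma value_normal: "is_value t \<Longrightarrow> \<not> safe_step t t'"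
  by (auto elim!: is_value.cases dest: safe_step_App safe_step_redex_head fix_mu_unsaturated_normal)

(* The disjunct is_value t' covers App (fix^mu_n s t_1..t_n) t, which is both the frame
   fix^mu_n s t_1..t_n _ around t and the frame _ t around the (normal) saturated fixpoint. *)
lemma fill_eq_fill_step:
  "fill e t = fill e' t' \<Longrightarrow> safe_step t u \<Longrightarrow> e = e' \<and> t = t' \<or> is_value t'"
  by (cases e; cases e')
    (auto dest: safe_step_App simp: apps_const_eq_iff fix_mu_unsaturated_normal is_value.intros)

lemma fill_not_value_normal:
  assumes "\<not> is_value u" and "\<And>u'. \<not> safe_step u u'"
  shows "\<not> is_value (fill e u) \<and> \<not> safe_step (fill e u) t'"
proof
  show "\<not> is_value (fill e u)"
    using assms by (cases e)
      (auto elim!: is_value.cases simp: App_eq_apps_iff apps_eq_App_iff apps_const_eq_iff is_value.intros)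
  show "\<not> safe_step (fill e u) t'"
  proof
    assume "safe_step (fill e u) t'"
    then show False using assms
      by (cases rule: safe_step.cases)
        (auto simp: fill_App_iffs App_eq_apps_iff apps_eq_App_iff apps_const_eq_iff is_value.intros
          split: frame.splits dest: fill_eq_fill_step[OF sym])
  qed
qed

lemma neutral_not_value_normal: "\<not> is_value (plugE E (Var x)) \<and> \<not> safe_step (plugE E (Var x)) t'"
proof (induction E arbitrary: t')
  case Nil
  show ?case by (auto elim!: is_value.cases dest: safe_step_App)
next
  case (Cons e E)
  then show ?case using fill_not_value_normal by simp
qed

lemma safe_step_fill_inv:
  assumes "safe_step (fill e t) u" and "safe_step t t'"
  shows "\<exists>t''. safe_step t t'' \<and> u = fill e t''"
  using assms(1)
proof (cases rule: safe_step.cases)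
  case (frame t1 t1' e1)
  with assms(2) show ?thesis by (auto dest: fill_eq_fill_step value_normal)
qed (use assms(2) in \<open>auto simp: fill_App_iffs is_value.intros value_normal split: frame.splits\<close>)

lemma safe_step_deterministic: "safe_step t u \<Longrightarrow> safe_step t u' \<Longrightarrow> u = u'"
proof (induction arbitrary: u' rule: safe_step.induct)
  case (frame t t' e)
  then show ?case by (metis safe_step_fill_inv)
qed (erule safe_step.cases;
     auto simp: fill_App_iffs App_eq_apps_iff apps_eq_App_iff apps_const_eq_iff is_value.intros value_normal
       split: frame.splits)+

lemma V_normal: "t \<in> V \<Longrightarrow> \<not> safe_step t t'"
  using value_normal neutral_not_value_normal by (auto simp: V_def)

lemma safe_unique_value:
  assumes "safe t u" "safe t u'" "u \<in> V" "u' \<in> V"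
  shows "u = u'"
proof (rule right_unique_rtranclp_normal_form)
  show "right_unique safe_step"
    by (auto intro: right_uniqueI safe_step_deterministic)
  show "safe_step\<^sup>*\<^sup>* t u" "safe_step\<^sup>*\<^sup>* t u'"
    using assms(1,2) by (auto intro: safe_imp_rtranclp_safe_step)
  show "\<not> safe_step u w" "\<not> safe_step u' w" for w
    using assms(3,4) V_normal by blast+
qed

theorem lemma4p5:
  fixes l :: "'o::wellorder"
    and A B :: "'o \<Rightarrow> tm set"
    and r :: tm
    and e :: frame
  assumes "is_nonzero_limit l"
  shows "ord_limsup (\<lambda>a. app_set r (A a)) l \<subseteq> app_set r (ord_limsup A l) \<and>
     ord_limsup (\<lambda>a. frame_inv e (A a)) l \<subseteq> frame_inv e (ord_limsup A l) \<and>
     ord_limsup (\<lambda>a. A a \<union> B a) l \<subseteq> ord_limsup A l \<union> ord_limsup B l \<and>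
     ((\<forall>a<l. A a \<subseteq> V) \<longrightarrow>
           ord_limsup (\<lambda>a. safe_pre (A a)) l \<subseteq> safe_pre (ord_limsup A l))"
proof (intro conjI impI)
  obtain a where "a < l" using assms unfolding is_nonzero_limit_def by blast
  have "app_set r X = App r ` X" for X by (auto simp: app_set_def)
  moreover have "inj (App r)" by (rule injI) simp
  ultimately show "ord_limsup (\<lambda>a. app_set r (A a)) l \<subseteq> app_set r (ord_limsup A l)"
    using ord_limsup_image_subset[of "App r" a l A] \<open>a < l\<close> by simp
  have "frame_inv e X = fill e -` X" for X by (auto simp: frame_inv_def)
  then show "ord_limsup (\<lambda>a. frame_inv e (A a)) l \<subseteq> frame_inv e (ord_limsup A l)"
    by (simp add: ord_limsup_vimage)
  show "ord_limsup (\<lambda>a. A a \<union> B a) l \<subseteq> ord_limsup A l \<union> ord_limsup B l"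
    by (simp add: ord_limsup_Un)
  assume "\<forall>a<l. A a \<subseteq> V"
  moreover have "safe_pre X = {t. \<exists>u. safe\<^sup>=\<^sup>= t u \<and> u \<in> X}" for X
    by (auto simp: safe_pre_def)
  ultimately show "ord_limsup (\<lambda>a. safe_pre (A a)) l \<subseteq> safe_pre (ord_limsup A l)"
    using ord_limsup_preimage_subset[of l A V safe] safe_unique_value by simp
qed

end
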